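(* Let $-\infty\le a<b\le\infty$, let $f,g$ be differentiable on $(a,b)$ with $g'\neq0$ and $g>0$ on $(a,b)$, and let $H_{f,g}=\frac{f'}{g'}g-f$. Assume $f'/g'$ is strictly monotone on $(a,b)$ (so that $H_{f,g}(a^+)=\lim_{x\to a^+}H_{f,g}(x)$ and $H_{f,g}(b^-)=\lim_{x\to b^-}H_{f,g}(x)$ exist in $[-\infty,\infty]$). (i) If $g'>0$ (resp. $g'<0$) on $(a,b)$, then $(f/g)'>0$ (resp. $(f/g)'<0$) on all of $(a,b)$ if and only if $\min(H_{f,g}(a^+),H_{f,g}(b^-))\ge 0$. (ii) If $g'>0$ (resp. $g'<0$) on $(a,b)$, then $(f/g)'<0$ (resp. $(f/g)'>0$) on all of $(a,b)$ if and only if $\max(H_{f,g}(a^+),H_{f,g}(b^-))\le 0$. (iii) If $f'/g'$ is strictly increasing on $(a,b)$, $H_{f,g}(a^+)<0$ and $H_{f,g}(b^-)>0$, then there is a unique $x_0\in(a,b)$ such that, when $g'>0$, $(f/g)'<0$ on $(a,x_0)$ and $(f/g)'>0$ on $(x_0,b)$; and when $g'<0$, $(f/g)'>0$ on $(a,x_0)$ and $(f/g)'<0$ on $(x_0,b)$. (iv) If $f'/g'$ is strictly decreasing on $(a,b)$, $H_{f,g}(a^+)>0$ and $H_{f,g}(b^-)<0$, then there is a unique $x_0\in(a,b)$ such that, when $g'>0$, $(f/g)'>0$ on $(a,x_0)$ and $(f/g)'<0$ on $(x_0,b)$; and when $g'<0$, $(f/g)'<0$ on $(a,x_0)$ and $(f/g)'>0$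 on $(x_0,b)$.
   Context: For differentiable $f,g$ on $(a,b)$ with $g'\ne 0$ there, $H_{f,g}(x)=\frac{f'(x)}{g'(x)}g(x)-f(x)$; $H_{f,g}(a^+)$, $H_{f,g}(b^-)$ denote its one-sided limits at the endpoints (possibly infinite). *)

theory Defs
  imports "HOL-Analysis.Analysis"
begin

definition eint :: "ereal \<Rightarrow> ereal \<Rightarrow> real set" where
  "eint a b = {x. a < ereal x \<and> ereal x < b}"

definition at_lower_end :: "ereal \<Rightarrow> real filter" where
  "at_lower_end a = (if a = -\<infinity> then at_bot else at_right (real_of_ereal a))"

definition at_upper_end :: "ereal \<Rightarrow> real filter" where
  "at_upper_end b = (if b = \<infinity> then at_top else at_left (real_of_ereal b))"

definition H_fg :: "(real \<Rightarrow> real) \<Rightarrow> (real \<Rightarrow> real) \<Rightarrow> (real \<Rightarrow> real) \<Rightarrow> (real \<Rightarrow> real) \<Rightarrow> real \<Rightarrow> real" where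
  "H_fg f f' g g' x = f' x / g' x * g x - f x"

definition H_lower :: "(real \<Rightarrow> real) \<Rightarrow> (real \<Rightarrow> real) \<Rightarrow> (real \<Rightarrow> real) \<Rightarrow> (real \<Rightarrow> real) \<Rightarrow> ereal \<Rightarrow> ereal" where
  "H_lower f f' g g' a = Lim (at_lower_end a) (\<lambda>x. ereal (H_fg f f' g g' x))"

definition H_upper :: "(real \<Rightarrow> real) \<Rightarrow> (real \<Rightarrow> real) \<Rightarrow> (real \<Rightarrow> real) \<Rightarrow> (real \<Rightarrow> real) \<Rightarrow> ereal \<Rightarrow> ereal" where
  "H_upper f f' g g' b = Lim (at_upper_end b) (\<lambda>x. ereal (H_fg f f' g g' x))"

definition strict_incr_on :: "real set \<Rightarrow> (real \<Rightarrow> real) \<Rightarrow> bool" where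
  "strict_incr_on S h = (\<forall>x\<in>S. \<forall>y\<in>S. x < y \<longrightarrow> h x < h y)"

definition strict_decr_on :: "real set \<Rightarrow> (real \<Rightarrow> real) \<Rightarrow> bool" where
  "strict_decr_on S h = (\<forall>x\<in>S. \<forall>y\<in>S. x < y \<longrightarrow> h x > h y)"

end

theory Submission
  imports Defs
begin

(* First, (f/g)' = g' H_{f,g} / g^2, so on (a,b)
   the sign of (f/g)' is the sign of H_{f,g} times the (constant) sign of g'.  Second, by
   Cauchy's mean value theorem and g > 0, H_{f,g} is strictly monotone in the same direction
   as f'/g'.  A strictly monotone function on an open interval has one-sided limits at the
   ends equal to its infimum and supremum, and attains neither; so it is positive (negative)
   throughout iff the smaller (larger) end limit is >= 0 (<= 0), and if the two end limits
   have opposite signs it changes sign at exactly one point. *)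

lemma eint_between:
  assumes "x \<in> eint a b" "y \<in> eint a b" "x \<le> z" "z \<le> y"
  shows "z \<in> eint a b"
proof -
  have "a < ereal x" "ereal y < b" using assms(1,2) unfolding eint_def by auto
  moreover have "ereal x \<le> ereal z" "ereal z \<le> ereal y" using assms(3,4) by auto
  ultimately have "a < ereal z" "ereal z < b" by (meson less_le_trans le_less_trans)+
  then show ?thesis unfolding eint_def by simp
qed

lemma eint_nonempty: "a < b \<Longrightarrow> eint a b \<noteq> {}"
  using ereal_dense2 unfolding eint_def by fastforce

lemma eint_left_part: "x0 \<in> eint a b \<Longrightarrow> x \<in> eint a (ereal x0) \<Longrightarrow> x \<in> eint a b"
  unfolding eint_def using less_trans by blast

lemma eint_right_part: "x0 \<in> eint a b \<Longrightarrow> x \<in> eint (ereal x0) b \<Longrightarrow> x \<in> eint a b"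
  unfolding eint_def using less_trans by blast

lemma eint_point_below: "x \<in> eint a b \<Longrightarrow> \<exists>y\<in>eint a b. y < x"
  using eint_left_part ereal_dense2 unfolding eint_def by fastforce

lemma eint_point_above: "x \<in> eint a b \<Longrightarrow> \<exists>y\<in>eint a b. x < y"
  using eint_right_part ereal_dense2 unfolding eint_def by fastforce

lemma eventually_at_lower_end:
  assumes "x0 \<in> eint a b"
  shows "eventually (\<lambda>x. x \<in> eint a b \<and> x < x0) (at_lower_end a)"
proof (cases a)
  case (real a')
  then have "a' < x0" using assms unfolding eint_def by auto
  have "x \<in> eint a b" if "a' < x" "x < x0" for x
    using that real assms unfolding eint_def by (auto intro: less_trans[of _ "ereal x0"])
  then show ?thesis
    using eventually_at_right_real[OF \<open>a' < x0\<close>] real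
    unfolding at_lower_end_def by (auto elim!: eventually_mono)
next
  case MInf
  then have "\<forall>x\<le>x0 - 1. x \<in> eint a b \<and> x < x0"
    using assms unfolding eint_def by (auto intro: order.strict_trans1[of _ "ereal x0"])
  then show ?thesis using MInf unfolding at_lower_end_def by (auto simp: eventually_at_bot_linorder)
qed (use assms in \<open>auto simp: eint_def\<close>)

lemma eventually_at_upper_end:
  assumes "x0 \<in> eint a b"
  shows "eventually (\<lambda>x. x \<in> eint a b \<and> x0 < x) (at_upper_end b)"
proof (cases b)
  case (real b')
  then have "x0 < b'" using assms unfolding eint_def by auto
  have "x \<in> eint a b" if "x0 < x" "x < b'" for x
    using that real assms unfolding eint_def by (auto intro: less_trans[of _ "ereal x0"])
  then show ?thesis
    using eventually_at_left_real[OF \<open>x0 < b'\<close>] real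
    unfolding at_upper_end_def by (auto elim!: eventually_mono)
next
  case PInf
  then have "\<forall>x\<ge>x0 + 1. x \<in> eint a b \<and> x0 < x"
    using assms unfolding eint_def by (auto intro: order.strict_trans2[of _ "ereal x0"])
  then show ?thesis using PInf unfolding at_upper_end_def by (auto simp: eventually_at_top_linorder)
qed (use assms in \<open>auto simp: eint_def\<close>)

lemma tendsto_INF_if_eventually_below:
  fixes h :: "'a \<Rightarrow> 'b::{complete_linorder, linorder_topology}"
  assumes "S \<noteq> {}" and below: "\<And>x0. x0 \<in> S \<Longrightarrow> eventually (\<lambda>x. x \<in> S \<and> h x \<le> h x0) F"
  shows "(h \<longlongrightarrow> (INF x\<in>S. h x)) F"
proof (rule order_tendstoI)
  fix y assume y: "y < (INF x\<in>S. h x)"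
  obtain x0 where "x0 \<in> S" using assms(1) by auto
  from below[OF this] show "eventually (\<lambda>x. y < h x) F"
    by (rule eventually_mono) (use y in \<open>auto simp: less_INF_D\<close>)
next
  fix y assume "(INF x\<in>S. h x) < y"
  then obtain x0 where x0: "x0 \<in> S" "h x0 < y" by (auto simp: INF_less_iff)
  from below[OF x0(1)] show "eventually (\<lambda>x. h x < y) F"
    by (rule eventually_mono) (use x0(2) in auto)
qed

lemma tendsto_SUP_if_eventually_above:
  fixes h :: "'a \<Rightarrow> 'b::{complete_linorder, linorder_topology}"
  assumes "S \<noteq> {}" and above: "\<And>x0. x0 \<in> S \<Longrightarrow> eventually (\<lambda>x. x \<in> S \<and> h x0 \<le> h x) F"
  shows "(h \<longlongrightarrow> (SUP x\<in>S. h x)) F"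
proof (rule order_tendstoI)
  fix y assume "y < (SUP x\<in>S. h x)"
  then obtain x0 where x0: "x0 \<in> S" "y < h x0" by (auto simp: less_SUP_iff)
  from above[OF x0(1)] show "eventually (\<lambda>x. y < h x) F"
    by (rule eventually_mono) (use x0(2) in auto)
next
  fix y assume y: "(SUP x\<in>S. h x) < y"
  obtain x0 where "x0 \<in> S" using assms(1) by auto
  from above[OF this] show "eventually (\<lambda>x. h x < y) F"
    by (rule eventually_mono) (use y in \<open>auto intro: le_less_trans[OF SUP_upper]\<close>)
qed

lemma at_lower_end_nontrivial: "at_lower_end a \<noteq> bot"
  unfolding at_lower_end_def by auto

lemma at_upper_end_nontrivial: "at_upper_end b \<noteq> bot"
  unfolding at_upper_end_def by auto

lemma end_limits_strict_incr:
  assumes "a < b" and incr: "strict_incr_on (eint a b) h"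
  shows "Lim (at_lower_end a) (\<lambda>x. ereal (h x)) = (INF x\<in>eint a b. ereal (h x))"
    and "Lim (at_upper_end b) (\<lambda>x. ereal (h x)) = (SUP x\<in>eint a b. ereal (h x))"
proof -
  have ne: "eint a b \<noteq> {}" using eint_nonempty[OF \<open>a < b\<close>] .
  show "Lim (at_lower_end a) (\<lambda>x. ereal (h x)) = (INF x\<in>eint a b. ereal (h x))"
  proof (intro tendsto_Lim at_lower_end_nontrivial tendsto_INF_if_eventually_below[OF ne])
    fix x0 assume "x0 \<in> eint a b"
    from eventually_at_lower_end[OF this]
    show "eventually (\<lambda>x. x \<in> eint a b \<and> ereal (h x) \<le> ereal (h x0)) (at_lower_end a)"
      by (rule eventually_mono) (use incr \<open>x0 \<in> eint a b\<close> in \<open>fastforce simp: strict_incr_on_def intro: less_imp_le\<close>)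
  qed
  show "Lim (at_upper_end b) (\<lambda>x. ereal (h x)) = (SUP x\<in>eint a b. ereal (h x))"
  proof (intro tendsto_Lim at_upper_end_nontrivial tendsto_SUP_if_eventually_above[OF ne])
    fix x0 assume "x0 \<in> eint a b"
    from eventually_at_upper_end[OF this]
    show "eventually (\<lambda>x. x \<in> eint a b \<and> ereal (h x0) \<le> ereal (h x)) (at_upper_end b)"
      by (rule eventually_mono) (use incr \<open>x0 \<in> eint a b\<close> in \<open>fastforce simp: strict_incr_on_def intro: less_imp_le\<close>)
  qed
qed

lemma end_limits_strict_decr:
  assumes "a < b" and decr: "strict_decr_on (eint a b) h"
  shows "Lim (at_lower_end a) (\<lambda>x. ereal (h x)) = (SUP x\<in>eint a b. ereal (h x))"
    and "Lim (at_upper_end b) (\<lambda>x. ereal (h x)) = (INF x\<in>eint a b. ereal (h x))"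
proof -
  have ne: "eint a b \<noteq> {}" using eint_nonempty[OF \<open>a < b\<close>] .
  show "Lim (at_lower_end a) (\<lambda>x. ereal (h x)) = (SUP x\<in>eint a b. ereal (h x))"
  proof (intro tendsto_Lim at_lower_end_nontrivial tendsto_SUP_if_eventually_above[OF ne])
    fix x0 assume "x0 \<in> eint a b"
    from eventually_at_lower_end[OF this]
    show "eventually (\<lambda>x. x \<in> eint a b \<and> ereal (h x0) \<le> ereal (h x)) (at_lower_end a)"
      by (rule eventually_mono) (use decr \<open>x0 \<in> eint a b\<close> in \<open>fastforce simp: strict_decr_on_def intro: less_imp_le\<close>)
  qed
  show "Lim (at_upper_end b) (\<lambda>x. ereal (h x)) = (INF x\<in>eint a b. ereal (h x))"
  proof (intro tendsto_Lim at_upper_end_nontrivial tendsto_INF_if_eventually_below[OF ne])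
    fix x0 assume "x0 \<in> eint a b"
    from eventually_at_upper_end[OF this]
    show "eventually (\<lambda>x. x \<in> eint a b \<and> ereal (h x) \<le> ereal (h x0)) (at_upper_end b)"
      by (rule eventually_mono) (use decr \<open>x0 \<in> eint a b\<close> in \<open>fastforce simp: strict_decr_on_def intro: less_imp_le\<close>)
  qed
qed

lemma min_max_end_limits:
  assumes "a < b" and "strict_incr_on (eint a b) h \<or> strict_decr_on (eint a b) h"
  shows "min (Lim (at_lower_end a) (\<lambda>x. ereal (h x))) (Lim (at_upper_end b) (\<lambda>x. ereal (h x)))
           = (INF x\<in>eint a b. ereal (h x))"
    and "max (Lim (at_lower_end a) (\<lambda>x. ereal (h x))) (Lim (at_upper_end b) (\<lambda>x. ereal (h x)))
           = (SUP x\<in>eint a b. ereal (h x))"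
proof -
  obtain x0 where "x0 \<in> eint a b" using eint_nonempty[OF \<open>a < b\<close>] by blast
  then have "(INF x\<in>eint a b. ereal (h x)) \<le> (SUP x\<in>eint a b. ereal (h x))"
    by (meson INF_lower SUP_upper order_trans)
  then show "min (Lim (at_lower_end a) (\<lambda>x. ereal (h x))) (Lim (at_upper_end b) (\<lambda>x. ereal (h x)))
           = (INF x\<in>eint a b. ereal (h x))"
    and "max (Lim (at_lower_end a) (\<lambda>x. ereal (h x))) (Lim (at_upper_end b) (\<lambda>x. ereal (h x)))
           = (SUP x\<in>eint a b. ereal (h x))"
    using assms(2) end_limits_strict_incr[OF \<open>a < b\<close>] end_limits_strict_decr[OF \<open>a < b\<close>]
    by (auto simp: min_def max_def)
qed

(* If h attains no minimum on S, then h is positive on S iff its infimum is nonnegative;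
  dually for negativity and the supremum. (The infimum itself may be 0 without being attained.) *)
lemma all_pos_iff_INF_nonneg:
  fixes h :: "'a \<Rightarrow> real"
  assumes no_min: "\<And>x. x \<in> S \<Longrightarrow> \<exists>y\<in>S. h y < h x"
  shows "(\<forall>x\<in>S. 0 < h x) \<longleftrightarrow> 0 \<le> (INF x\<in>S. ereal (h x))"
proof
  assume "\<forall>x\<in>S. 0 < h x"
  then show "0 \<le> (INF x\<in>S. ereal (h x))" by (auto intro!: INF_greatest)
next
  assume inf: "0 \<le> (INF x\<in>S. ereal (h x))"
  show "\<forall>x\<in>S. 0 < h x"
  proof
    fix x assume "x \<in> S"
    then obtain y where "y \<in> S" "h y < h x" using no_min by blast
    then have "0 \<le> ereal (h y)" using order_trans[OF inf INF_lower] by blast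
    with \<open>h y < h x\<close> show "0 < h x" by simp
  qed
qed

lemma all_neg_iff_SUP_nonpos:
  fixes h :: "'a \<Rightarrow> real"
  assumes no_max: "\<And>x. x \<in> S \<Longrightarrow> \<exists>y\<in>S. h x < h y"
  shows "(\<forall>x\<in>S. h x < 0) \<longleftrightarrow> (SUP x\<in>S. ereal (h x)) \<le> 0"
proof
  assume "\<forall>x\<in>S. h x < 0"
  then show "(SUP x\<in>S. ereal (h x)) \<le> 0" by (auto intro!: SUP_least)
next
  assume sup: "(SUP x\<in>S. ereal (h x)) \<le> 0"
  show "\<forall>x\<in>S. h x < 0"
  proof
    fix x assume "x \<in> S"
    then obtain y where "y \<in> S" "h x < h y" using no_max by blast
    then have "ereal (h y) \<le> 0" using order_trans[OF SUP_upper sup] by blast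
    with \<open>h x < h y\<close> show "h x < 0" by simp
  qed
qed

lemma strict_monotone_no_extremum:
  assumes "strict_incr_on (eint a b) h \<or> strict_decr_on (eint a b) h" and "x \<in> eint a b"
  shows "\<exists>y\<in>eint a b. h y < h x" and "\<exists>y\<in>eint a b. h x < h y"
  using assms eint_point_below[OF assms(2)] eint_point_above[OF assms(2)]
  unfolding strict_incr_on_def strict_decr_on_def by blast+

definition sign_change_at :: "ereal \<Rightarrow> ereal \<Rightarrow> (real \<Rightarrow> real) \<Rightarrow> real \<Rightarrow> bool" where
  "sign_change_at a b h x0 \<longleftrightarrow>
     (\<forall>x\<in>eint a (ereal x0). h x < 0) \<and> (\<forall>x\<in>eint (ereal x0) b. 0 < h x)"

(* A sign change point is unique: between two of them, h would be both negative and positive. *)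
lemma sign_change_at_unique:
  assumes "x1 \<in> eint a b" "x2 \<in> eint a b"
    and "sign_change_at a b h x1" "sign_change_at a b h x2"
  shows "x1 = x2"
proof -
  have False if "y1 < y2" "y1 \<in> eint a b" "y2 \<in> eint a b"
    "sign_change_at a b h y1" "sign_change_at a b h y2" for y1 y2
  proof -
    define m where "m = (y1 + y2) / 2"
    have "y1 < m" "m < y2" using \<open>y1 < y2\<close> unfolding m_def by auto
    then have "m \<in> eint a (ereal y2)" "m \<in> eint (ereal y1) b"
      using that(2,3) eint_between[OF that(2,3), of m] unfolding eint_def by auto
    then show False using that(4,5) unfolding sign_change_at_def by force
  qed
  then show ?thesis using assms by (cases x1 x2 rule: linorder_cases) blast+
qed

(* A strictly increasing function taking both signs changes sign at the supremum of the
  set where it is negative (no continuity is needed). *)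
lemma sign_change_exists_strict_incr:
  assumes incr: "strict_incr_on (eint a b) h"
    and p: "p \<in> eint a b" "h p < 0" and q: "q \<in> eint a b" "0 < h q"
  shows "\<exists>x0\<in>eint a b. sign_change_at a b h x0"
proof -
  define S where "S = {x\<in>eint a b. h x < 0}"
  define x0 where "x0 = Sup S"
  have below_q: "s < q" if "s \<in> S" for s
  proof (rule ccontr)
    assume "\<not> s < q"
    then have "q < s \<or> q = s" by auto
    then have "h q \<le> h s"
      using incr that q(1) unfolding S_def strict_incr_on_def by (auto intro: less_imp_le)
    then show False using that q(2) unfolding S_def by auto
  qed
  have "p \<in> S" using p unfolding S_def by auto
  have bdd: "bdd_above S" by (rule bdd_aboveI[of _ q]) (use below_q in \<open>auto intro: less_imp_le\<close>)
  have "p \<le> x0" unfolding x0_def using cSup_upper[OF \<open>p \<in> S\<close> bdd] .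
  moreover have "x0 \<le> q" unfolding x0_def
    by (rule cSup_least) (use below_q \<open>p \<in> S\<close> in \<open>auto intro: less_imp_le\<close>)
  ultimately have x0: "x0 \<in> eint a b" using eint_between[OF p(1) q(1)] by auto
  have "h x < 0" if x: "x \<in> eint a (ereal x0)" for x
  proof -
    have "x < x0" using x unfolding eint_def by auto
    then obtain s where "s \<in> S" "x < s"
      using less_cSup_iff[OF _ bdd] \<open>p \<in> S\<close> unfolding x0_def by auto
    then show "h x < 0"
      using incr eint_left_part[OF x0 x] unfolding S_def strict_incr_on_def by force
  qed
  moreover have "0 < h x" if x: "x \<in> eint (ereal x0) b" for x
  proof -
    define y where "y = (x0 + x) / 2"
    have "x0 < x" using x unfolding eint_def by auto
    then have y: "x0 < y" "y < x" unfolding y_def by auto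
    have xI: "x \<in> eint a b" using eint_right_part[OF x0 x] .
    have yI: "y \<in> eint a b" using eint_between[OF x0 xI] y by auto
    have "y \<notin> S" using cSup_upper[OF _ bdd, of y] y unfolding x0_def by auto
    then have "0 \<le> h y" using yI unfolding S_def by auto
    also have "h y < h x" using incr y xI yI unfolding strict_incr_on_def by auto
    finally show "0 < h x" .
  qed
  ultimately show ?thesis using x0 unfolding sign_change_at_def by blast
qed

lemma ex1_sign_change_strict_incr:
  assumes incr: "strict_incr_on (eint a b) h"
    and "(INF x\<in>eint a b. ereal (h x)) < 0" "0 < (SUP x\<in>eint a b. ereal (h x))"
  shows "\<exists>!x0\<in>eint a b. sign_change_at a b h x0"
proof -
  obtain p where "p \<in> eint a b" "h p < 0" using assms(2) by (auto simp: INF_less_iff)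
  moreover obtain q where "q \<in> eint a b" "0 < h q" using assms(3) by (auto simp: less_SUP_iff)
  ultimately show ?thesis
    using sign_change_exists_strict_incr[OF incr] sign_change_at_unique by blast
qed

lemma ex1_sign_change_strict_decr:
  assumes decr: "strict_decr_on (eint a b) h"
    and "0 < (SUP x\<in>eint a b. ereal (h x))" "(INF x\<in>eint a b. ereal (h x)) < 0"
  shows "\<exists>!x0\<in>eint a b. sign_change_at a b (\<lambda>x. - h x) x0"
proof (rule ex1_sign_change_strict_incr)
  show "strict_incr_on (eint a b) (\<lambda>x. - h x)"
    using decr unfolding strict_incr_on_def strict_decr_on_def by auto
  have "(INF x\<in>eint a b. - ereal (h x)) = - (SUP x\<in>eint a b. ereal (h x))"
    and "(SUP x\<in>eint a b. - ereal (h x)) = - (INF x\<in>eint a b. ereal (h x))"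
    by (rule ereal_INF_uminus_eq ereal_SUP_uminus_eq)+
  then show "(INF x\<in>eint a b. ereal (- h x)) < 0" "0 < (SUP x\<in>eint a b. ereal (- h x))"
    using assms(2,3) by (simp_all add: ereal_uminus_less_reorder ereal_less_uminus_reorder)
qed

lemma ex1_sign_change_cong:
  assumes "\<forall>x\<in>eint a b. (0 < u x \<longleftrightarrow> 0 < v x) \<and> (u x < 0 \<longleftrightarrow> v x < 0)"
  shows "(\<exists>!x0\<in>eint a b. sign_change_at a b u x0) \<longleftrightarrow> (\<exists>!x0\<in>eint a b. sign_change_at a b v x0)"
proof -
  have "sign_change_at a b u x0 \<longleftrightarrow> sign_change_at a b v x0" if "x0 \<in> eint a b" for x0
    using assms eint_left_part[OF that] eint_right_part[OF that]
    unfolding sign_change_at_def by meson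
  then show ?thesis by blast
qed

(* Cauchy's mean value theorem: f(y) - f(x) = (g(y) - g(x)) f'(c)/g'(c) for some c in (x,y),
  which expresses the increment of H_{f,g} through increments of f'/g'. *)
lemma H_fg_increment:
  assumes df: "\<forall>x\<in>eint a b. (f has_real_derivative f' x) (at x)"
    and dg: "\<forall>x\<in>eint a b. (g has_real_derivative g' x) (at x)"
    and g'nz: "\<forall>x\<in>eint a b. g' x \<noteq> 0"
    and x: "x \<in> eint a b" and y: "y \<in> eint a b" and "x < y"
  obtains c where "x < c" "c < y"
    "H_fg f f' g g' y - H_fg f f' g g' x =
       (f' y / g' y - f' c / g' c) * g y + (f' c / g' c - f' x / g' x) * g x"
proof -
  have I: "z \<in> eint a b" if "x \<le> z" "z \<le> y" for z using eint_between[OF x y that] .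
  have "\<exists>c. x < c \<and> c < y \<and> (f y - f x) * g' c = (g y - g x) * f' c"
    by (rule GMVT'[OF \<open>x < y\<close>]) (use I df dg in \<open>auto intro: DERIV_isCont\<close>)
  then obtain c where c: "x < c" "c < y" "(f y - f x) * g' c = (g y - g x) * f' c" by blast
  have "g' c \<noteq> 0" using g'nz I c by auto
  define r where "r = f' c / g' c"
  from c(3) \<open>g' c \<noteq> 0\<close> have "f y - f x = (g y - g x) * r"
    unfolding r_def by (simp add: field_simps)
  then have "H_fg f f' g g' y - H_fg f f' g g' x =
      (f' y / g' y - r) * g y + (r - f' x / g' x) * g x"
    unfolding H_fg_def by (simp add: algebra_simps)
  then have "H_fg f f' g g' y - H_fg f f' g g' x =
      (f' y / g' y - f' c / g' c) * g y + (f' c / g' c - f' x / g' x) * g x"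
    unfolding r_def .
  with c(1,2) show ?thesis using that by blast
qed

(* Since g > 0, H_{f,g} is strictly monotone in the same direction as f'/g'. The decreasing
  case follows from the increasing one applied to -f. *)
lemma H_fg_strict_incr:
  assumes df: "\<forall>x\<in>eint a b. (f has_real_derivative f' x) (at x)"
    and dg: "\<forall>x\<in>eint a b. (g has_real_derivative g' x) (at x)"
    and g'nz: "\<forall>x\<in>eint a b. g' x \<noteq> 0"
    and gpos: "\<forall>x\<in>eint a b. g x > 0"
    and r: "strict_incr_on (eint a b) (\<lambda>x. f' x / g' x)"
  shows "strict_incr_on (eint a b) (H_fg f f' g g')"
  unfolding strict_incr_on_def
proof (intro ballI impI)
  fix x y assume x: "x \<in> eint a b" and y: "y \<in> eint a b" and "x < y"
  obtain c where c: "x < c" "c < y" and incr: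
    "H_fg f f' g g' y - H_fg f f' g g' x =
       (f' y / g' y - f' c / g' c) * g y + (f' c / g' c - f' x / g' x) * g x"
    using H_fg_increment[OF df dg g'nz x y \<open>x < y\<close>] by blast
  have "c \<in> eint a b" using eint_between[OF x y] c by auto
  then have "0 < (f' y / g' y - f' c / g' c) * g y" "0 < (f' c / g' c - f' x / g' x) * g x"
    using r x y c gpos unfolding strict_incr_on_def by auto
  with incr show "H_fg f f' g g' x < H_fg f f' g g' y" by linarith
qed

lemma H_fg_strict_decr:
  assumes df: "\<forall>x\<in>eint a b. (f has_real_derivative f' x) (at x)"
    and dg: "\<forall>x\<in>eint a b. (g has_real_derivative g' x) (at x)"
    and g'nz: "\<forall>x\<in>eint a b. g' x \<noteq> 0"
    and gpos: "\<forall>x\<in>eint a b. g x > 0"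
    and r: "strict_decr_on (eint a b) (\<lambda>x. f' x / g' x)"
  shows "strict_decr_on (eint a b) (H_fg f f' g g')"
proof -
  have "\<forall>x\<in>eint a b. ((\<lambda>t. - f t) has_real_derivative - f' x) (at x)"
    using df by (auto intro: DERIV_minus)
  moreover have "strict_incr_on (eint a b) (\<lambda>x. - f' x / g' x)"
    using r unfolding strict_incr_on_def strict_decr_on_def by auto
  ultimately have "strict_incr_on (eint a b) (H_fg (\<lambda>t. - f t) (\<lambda>t. - f' t) g g')"
    using H_fg_strict_incr[OF _ dg g'nz gpos, of "\<lambda>t. - f t" "\<lambda>t. - f' t"] by simp
  moreover have "H_fg (\<lambda>t. - f t) (\<lambda>t. - f' t) g g' = (\<lambda>x. - H_fg f f' g g' x)"
    by (simp add: H_fg_def fun_eq_iff)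
  ultimately show ?thesis unfolding strict_incr_on_def strict_decr_on_def by auto
qed

lemma deriv_quotient:
  assumes "(f has_real_derivative f' x) (at x)" "(g has_real_derivative g' x) (at x)"
    and "g' x \<noteq> 0" "g x > 0"
  shows "deriv (\<lambda>t. f t / g t) x = g' x * H_fg f f' g g' x / (g x)\<^sup>2"
proof -
  have "deriv (\<lambda>t. f t / g t) x = (f' x * g x - f x * g' x) / (g x * g x)"
    using assms by (intro DERIV_imp_deriv DERIV_divide) auto
  also have "\<dots> = g' x * H_fg f f' g g' x / (g x)\<^sup>2"
    unfolding H_fg_def using assms by (simp add: field_simps power2_eq_square)
  finally show ?thesis .
qed

lemma sign_of_quotient_factor:
  fixes k h c :: real
  assumes "0 < c"
  shows "0 < k \<Longrightarrow> (0 < k * h / c \<longleftrightarrow> 0 < h) \<and> (k * h / c < 0 \<longleftrightarrow> h < 0)"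
    and "k < 0 \<Longrightarrow> (0 < - (k * h / c) \<longleftrightarrow> 0 < h) \<and> (- (k * h / c) < 0 \<longleftrightarrow> h < 0)"
  using assms by (auto simp: zero_less_divide_iff divide_less_0_iff zero_less_mult_iff mult_less_0_iff)

lemma deriv_quotient_sign:
  assumes df: "\<forall>x\<in>eint a b. (f has_real_derivative f' x) (at x)"
    and dg: "\<forall>x\<in>eint a b. (g has_real_derivative g' x) (at x)"
    and gpos: "\<forall>x\<in>eint a b. g x > 0"
  shows "\<forall>x\<in>eint a b. g' x > 0 \<Longrightarrow> \<forall>x\<in>eint a b.
           (0 < deriv (\<lambda>t. f t / g t) x \<longleftrightarrow> 0 < H_fg f f' g g' x) \<and>
           (deriv (\<lambda>t. f t / g t) x < 0 \<longleftrightarrow> H_fg f f' g g' x < 0)"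
    and "\<forall>x\<in>eint a b. g' x < 0 \<Longrightarrow> \<forall>x\<in>eint a b.
           (0 < - deriv (\<lambda>t. f t / g t) x \<longleftrightarrow> 0 < H_fg f f' g g' x) \<and>
           (- deriv (\<lambda>t. f t / g t) x < 0 \<longleftrightarrow> H_fg f f' g g' x < 0)"
proof -
  have D: "deriv (\<lambda>t. f t / g t) x = g' x * H_fg f f' g g' x / (g x)\<^sup>2"
    and g2: "0 < (g x)\<^sup>2" if "x \<in> eint a b" "g' x \<noteq> 0" for x
    using deriv_quotient[of f f' x g g'] that df dg gpos by auto
  show "\<forall>x\<in>eint a b.
           (0 < deriv (\<lambda>t. f t / g t) x \<longleftrightarrow> 0 < H_fg f f' g g' x) \<and>
           (deriv (\<lambda>t. f t / g t) x < 0 \<longleftrightarrow> H_fg f f' g g' x < 0)" (is "\<forall>x\<in>_. ?P x")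
    if "\<forall>x\<in>eint a b. g' x > 0"
  proof
    fix x assume x: "x \<in> eint a b"
    then have sign: "0 < g' x" and nz: "g' x \<noteq> 0" using that by auto
    show "?P x" unfolding D[OF x nz] using sign_of_quotient_factor(1)[OF g2[OF x nz] sign] .
  qed
  show "\<forall>x\<in>eint a b.
           (0 < - deriv (\<lambda>t. f t / g t) x \<longleftrightarrow> 0 < H_fg f f' g g' x) \<and>
           (- deriv (\<lambda>t. f t / g t) x < 0 \<longleftrightarrow> H_fg f f' g g' x < 0)" (is "\<forall>x\<in>_. ?P x")
    if "\<forall>x\<in>eint a b. g' x < 0"
  proof
    fix x assume x: "x \<in> eint a b"
    then have sign: "g' x < 0" and nz: "g' x \<noteq> 0" using that by auto
    show "?P x" unfolding D[OF x nz] using sign_of_quotient_factor(2)[OF g2[OF x nz] sign] .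
  qed
qed

lemma sign_pattern_of_H:
  fixes a b :: ereal and f f' g g' u :: "real \<Rightarrow> real"
  defines "L \<equiv> H_lower f f' g g' a" and "U \<equiv> H_upper f f' g g' b"
  assumes ab: "a < b"
    and df: "\<forall>x\<in>eint a b. (f has_real_derivative f' x) (at x)"
    and dg: "\<forall>x\<in>eint a b. (g has_real_derivative g' x) (at x)"
    and g'nz: "\<forall>x\<in>eint a b. g' x \<noteq> 0"
    and gpos: "\<forall>x\<in>eint a b. g x > 0"
    and mono: "strict_incr_on (eint a b) (\<lambda>x. f' x / g' x) \<or> strict_decr_on (eint a b) (\<lambda>x. f' x / g' x)"
    and same_sign: "\<forall>x\<in>eint a b. (0 < u x \<longleftrightarrow> 0 < H_fg f f' g g' x) \<and> (u x < 0 \<longleftrightarrow> H_fg f f' g g' x < 0)"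
  shows "(\<forall>x\<in>eint a b. 0 < u x) \<longleftrightarrow> 0 \<le> min L U"
    and "(\<forall>x\<in>eint a b. u x < 0) \<longleftrightarrow> max L U \<le> 0"
    and "strict_incr_on (eint a b) (\<lambda>x. f' x / g' x) \<Longrightarrow> L < 0 \<Longrightarrow> 0 < U \<Longrightarrow>
           \<exists>!x0\<in>eint a b. sign_change_at a b u x0"
    and "strict_decr_on (eint a b) (\<lambda>x. f' x / g' x) \<Longrightarrow> 0 < L \<Longrightarrow> U < 0 \<Longrightarrow>
           \<exists>!x0\<in>eint a b. sign_change_at a b (\<lambda>x. - u x) x0"
proof -
  let ?I = "eint a b" and ?H = "H_fg f f' g g'"
  have LU: "L = Lim (at_lower_end a) (\<lambda>x. ereal (?H x))" "U = Lim (at_upper_end b) (\<lambda>x. ereal (?H x))"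
    unfolding L_def U_def H_lower_def H_upper_def by simp_all
  have H_incr: "strict_incr_on ?I ?H" if "strict_incr_on ?I (\<lambda>x. f' x / g' x)"
    using H_fg_strict_incr[OF df dg g'nz gpos that] .
  have H_decr: "strict_decr_on ?I ?H" if "strict_decr_on ?I (\<lambda>x. f' x / g' x)"
    using H_fg_strict_decr[OF df dg g'nz gpos that] .
  have H_mono: "strict_incr_on ?I ?H \<or> strict_decr_on ?I ?H"
    using mono H_incr H_decr by blast
  note min_max = min_max_end_limits[OF ab H_mono, folded LU]
  show "(\<forall>x\<in>?I. 0 < u x) \<longleftrightarrow> 0 \<le> min L U"
    using all_pos_iff_INF_nonneg[OF strict_monotone_no_extremum(1)[OF H_mono]] same_sign min_max
    by simp
  show "(\<forall>x\<in>?I. u x < 0) \<longleftrightarrow> max L U \<le> 0"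
    using all_neg_iff_SUP_nonpos[OF strict_monotone_no_extremum(2)[OF H_mono]] same_sign min_max
    by simp
  have same_sign_neg: "\<forall>x\<in>?I. (0 < - u x \<longleftrightarrow> 0 < - ?H x) \<and> (- u x < 0 \<longleftrightarrow> - ?H x < 0)"
    using same_sign by auto
  show "\<exists>!x0\<in>?I. sign_change_at a b u x0"
    if "strict_incr_on ?I (\<lambda>x. f' x / g' x)" "L < 0" "0 < U"
    using ex1_sign_change_strict_incr[OF H_incr] end_limits_strict_incr[OF ab H_incr] that
      ex1_sign_change_cong[OF same_sign] LU by simp
  show "\<exists>!x0\<in>?I. sign_change_at a b (\<lambda>x. - u x) x0"
    if "strict_decr_on ?I (\<lambda>x. f' x / g' x)" "0 < L" "U < 0"
    using ex1_sign_change_strict_decr[OF H_decr] end_limits_strict_decr[OF ab H_decr] that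
      ex1_sign_change_cong[OF same_sign_neg] LU by simp
qed

(* Main theorem: apply the sign pattern to u = (f/g)' if g' > 0 and to u = -(f/g)' if g' < 0. *)
theorem mainTheorem2:
  fixes a b :: ereal and f f' g g' :: "real \<Rightarrow> real"
  assumes ab: "a < b"
    and df: "\<forall>x\<in>eint a b. (f has_real_derivative f' x) (at x)"
    and dg: "\<forall>x\<in>eint a b. (g has_real_derivative g' x) (at x)"
    and g'nz: "\<forall>x\<in>eint a b. g' x \<noteq> 0"
    and gpos: "\<forall>x\<in>eint a b. g x > 0"
    and mono: "strict_incr_on (eint a b) (\<lambda>x. f' x / g' x) \<or> strict_decr_on (eint a b) (\<lambda>x. f' x / g' x)"
  shows
   "((\<forall>x\<in>eint a b. g' x > 0) \<longrightarrow>
       ((\<forall>x\<in>eint a b. deriv (\<lambda>t. f t / g t) x > 0) \<longleftrightarrow> min (H_lower f f' g g' a) (H_upper f f' g g' b) \<ge> 0)) \<and>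
    ((\<forall>x\<in>eint a b. g' x < 0) \<longrightarrow>
       ((\<forall>x\<in>eint a b. deriv (\<lambda>t. f t / g t) x < 0) \<longleftrightarrow> min (H_lower f f' g g' a) (H_upper f f' g g' b) \<ge> 0)) \<and>
    ((\<forall>x\<in>eint a b. g' x > 0) \<longrightarrow>
       ((\<forall>x\<in>eint a b. deriv (\<lambda>t. f t / g t) x < 0) \<longleftrightarrow> max (H_lower f f' g g' a) (H_upper f f' g g' b) \<le> 0)) \<and>
    ((\<forall>x\<in>eint a b. g' x < 0) \<longrightarrow>
       ((\<forall>x\<in>eint a b. deriv (\<lambda>t. f t / g t) x > 0) \<longleftrightarrow> max (H_lower f f' g g' a) (H_upper f f' g g' b) \<le> 0)) \<and>
    ((strict_incr_on (eint a b) (\<lambda>x. f' x / g' x) \<and> H_lower f f' g g' a < 0 \<and> H_upper f f' g g' b > 0) \<longrightarrow>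
       ((\<forall>x\<in>eint a b. g' x > 0) \<longrightarrow>
          (\<exists>!x0\<in>eint a b. (\<forall>x\<in>eint a (ereal x0). deriv (\<lambda>t. f t / g t) x < 0) \<and>
                            (\<forall>x\<in>eint (ereal x0) b. deriv (\<lambda>t. f t / g t) x > 0))) \<and>
       ((\<forall>x\<in>eint a b. g' x < 0) \<longrightarrow>
          (\<exists>!x0\<in>eint a b. (\<forall>x\<in>eint a (ereal x0). deriv (\<lambda>t. f t / g t) x > 0) \<and>
                            (\<forall>x\<in>eint (ereal x0) b. deriv (\<lambda>t. f t / g t) x < 0)))) \<and>
    ((strict_decr_on (eint a b) (\<lambda>x. f' x / g' x) \<and> H_lower f f' g g' a > 0 \<and> H_upper f f' g g' b < 0) \<longrightarrow>
       ((\<forall>x\<in>eint a b. g' x > 0) \<longrightarrow>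
          (\<exists>!x0\<in>eint a b. (\<forall>x\<in>eint a (ereal x0). deriv (\<lambda>t. f t / g t) x > 0) \<and>
                            (\<forall>x\<in>eint (ereal x0) b. deriv (\<lambda>t. f t / g t) x < 0))) \<and>
       ((\<forall>x\<in>eint a b. g' x < 0) \<longrightarrow>
          (\<exists>!x0\<in>eint a b. (\<forall>x\<in>eint a (ereal x0). deriv (\<lambda>t. f t / g t) x < 0) \<and>
                            (\<forall>x\<in>eint (ereal x0) b. deriv (\<lambda>t. f t / g t) x > 0))))"
proof -
  note pattern = sign_pattern_of_H[OF ab df dg g'nz gpos mono]
  note up = pattern[OF deriv_quotient_sign(1)[OF df dg gpos], unfolded sign_change_at_def, simplified]
  note down = pattern[OF deriv_quotient_sign(2)[OF df dg gpos], unfolded sign_change_at_def, simplified]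
  show ?thesis
    by (intro conjI impI) (simp_all add: up down)
qed

end
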